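(* Let $\mathcal{A}$ be an associative unital algebra over $\mathbb{C}$ and let $B=(B_{ij})_{1\le i,j\le g}$ be a $g\times g$ matrix with entries in $\mathcal{A}$ such that entries in different rows commute: $[B_{ik},B_{jl}]=0$ whenever $i\neq j$ (for all $k,l$). Let $D\in\mathcal A$ be the determinant of $B$ and $\Delta_{ij}\in\mathcal A$ the signed cofactor of $B_{ij}$ (defined below). Assume $D$ is invertible in $\mathcal{A}$ and that $B$ is invertible in $\mathrm{Mat}_g(\mathcal{A})$. Then the inverse is given by $(B^{-1})_{ij}=D^{-1}\Delta_{ji}$, and elements in the same column of $B^{-1}$ commute: $$[(B^{-1})_{ir},(B^{-1})_{jr}]=0\qquad\text{for all } i,j,r\in\{1,\dots,g\}.$$ Equivalently, $\Delta_{ri}D^{-1}\Delta_{rj}=\Delta_{rj}D^{-1}\Delta_{ri}$ for all $i,j,r$.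
   Context: Because entries of $B$ lying in different rows commute, the determinant $D=\sum_{\sigma\in S_g}\mathrm{sgn}(\sigma)\,B_{1\sigma(1)}B_{2\sigma(2)}\cdots B_{g\sigma(g)}$ is independent of the order of the factors in each product. Likewise the cofactor $\Delta_{ij}$ is $(-1)^{i+j}$ times the determinant (defined the same way) of the $(g-1)\times(g-1)$ matrix obtained from $B$ by deleting row $i$ and column $j$; it is also well defined. *)

theory Defs
  imports Complex_Main "HOL-Combinatorics.Permutations"
begin

text \<open>Matrices of size g over a (possibly noncommutative) ring are functions
  nat \<Rightarrow> nat \<Rightarrow> 'a, indices ranging over {0..<g} (the paper uses 1..g).\<close>

definition rdet :: "nat \<Rightarrow> (nat \<Rightarrow> nat \<Rightarrow> 'a::ring_1) \<Rightarrow> 'a" where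
  "rdet g B = (\<Sum>\<sigma>\<in>{\<sigma>. \<sigma> permutes {..<g}}.
      of_int (sign \<sigma>) * prod_list (map (\<lambda>i. B i (\<sigma> i)) [0..<g]))"

definition minor :: "(nat \<Rightarrow> nat \<Rightarrow> 'a) \<Rightarrow> nat \<Rightarrow> nat \<Rightarrow> nat \<Rightarrow> nat \<Rightarrow> 'a" where
  "minor B i j k l = B (if k < i then k else Suc k) (if l < j then l else Suc l)"

definition cofactor :: "nat \<Rightarrow> (nat \<Rightarrow> nat \<Rightarrow> 'a::ring_1) \<Rightarrow> nat \<Rightarrow> nat \<Rightarrow> 'a" where
  "cofactor g B i j = (-1) ^ (i + j) * rdet (g - 1) (minor B i j)"

definition matmul :: "nat \<Rightarrow> (nat \<Rightarrow> nat \<Rightarrow> 'a::ring_1) \<Rightarrow> (nat \<Rightarrow> nat \<Rightarrow> 'a) \<Rightarrow> nat \<Rightarrow> nat \<Rightarrow> 'a" where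
  "matmul g B C i j = (\<Sum>k<g. B i k * C k j)"

definition idmat :: "nat \<Rightarrow> nat \<Rightarrow> 'a::ring_1" where
  "idmat i j = (if i = j then 1 else 0)"

text \<open>A unital associative C-algebra structure on a ring: a unital ring
  homomorphism from C into the centre.\<close>
definition complex_algebra_hom :: "(complex \<Rightarrow> 'a::ring_1) \<Rightarrow> bool" where
  "complex_algebra_hom \<phi> \<longleftrightarrow>
     (\<forall>a b. \<phi> (a + b) = \<phi> a + \<phi> b) \<and> (\<forall>a b. \<phi> (a * b) = \<phi> a * \<phi> b) \<and>
     \<phi> 1 = 1 \<and> (\<forall>c x. \<phi> c * x = x * \<phi> c)"

end

theory Submission
  imports Defs "Jordan_Normal_Form.Determinant"
begin

hide_const (open) Determinant.cofactor

text \<open>Everything rests on the Laplace-type identity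
  \<open>\<Delta>\<^sub>s\<^sub>i x = det (B with row s replaced by x e\<^sub>i)\<close>, valid whenever \<open>x\<close> commutes
  with the other rows of \<open>B\<close>. Summing it over \<open>s\<close> gives \<open>\<Sum>\<^sub>s \<Delta>\<^sub>s\<^sub>i B\<^sub>s\<^sub>k = \<delta>\<^sub>i\<^sub>k D\<close>,
  hence \<open>\<Sum>\<^sub>s \<Delta>\<^sub>s\<^sub>i (B C)\<^sub>s\<^sub>r = D C\<^sub>i\<^sub>r\<close> for every matrix \<open>C\<close>. For a right inverse \<open>C\<close>
  this is \<open>\<Delta>\<^sub>r\<^sub>i = D C\<^sub>i\<^sub>r\<close>. Applied instead to \<open>B\<close> with row \<open>r\<close> replaced by \<open>e\<^sub>j\<close>,
  whose determinant is \<open>\<Delta>\<^sub>r\<^sub>j\<close> and whose product with \<open>C\<close> has column \<open>r\<close> equal to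
  \<open>C\<^sub>j\<^sub>r e\<^sub>r\<close>, it gives \<open>\<Delta>\<^sub>r\<^sub>i C\<^sub>j\<^sub>r = \<Delta>\<^sub>r\<^sub>j C\<^sub>i\<^sub>r\<close>; substituting \<open>C\<^sub>j\<^sub>r = D\<^sup>-\<^sup>1 \<Delta>\<^sub>r\<^sub>j\<close>
  yields both commutation relations.\<close>

definition rows_commute :: "nat \<Rightarrow> (nat \<Rightarrow> nat \<Rightarrow> 'a::times) \<Rightarrow> bool" where
  "rows_commute g M \<longleftrightarrow>
     (\<forall>i<g. \<forall>j<g. \<forall>k<g. \<forall>l<g. i \<noteq> j \<longrightarrow> M i k * M j l = M j l * M i k)"

definition replace_row :: "(nat \<Rightarrow> nat \<Rightarrow> 'a) \<Rightarrow> nat \<Rightarrow> (nat \<Rightarrow> 'a) \<Rightarrow> nat \<Rightarrow> nat \<Rightarrow> 'a" where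
  "replace_row M s v = (\<lambda>t l. if t = s then v l else M t l)"

definition replace_col :: "(nat \<Rightarrow> nat \<Rightarrow> 'a) \<Rightarrow> nat \<Rightarrow> (nat \<Rightarrow> 'a) \<Rightarrow> nat \<Rightarrow> nat \<Rightarrow> 'a" where
  "replace_col M i v = (\<lambda>t l. if l = i then v t else M t l)"

lemma prod_list_eq_0_if_0_in_set: "(0::'a::{monoid_mult,mult_zero}) \<in> set xs \<Longrightarrow> prod_list xs = 0"
  by (induction xs) auto

lemma prod_list_commute:
  fixes x :: "'a::monoid_mult"
  assumes "\<And>y. y \<in> set ys \<Longrightarrow> x * y = y * x"
  shows "x * prod_list ys = prod_list ys * x"
  using assms
proof (induction ys)
  case (Cons a ys)
  have "x * prod_list (a # ys) = a * (x * prod_list ys)"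
    using Cons.prems by (simp flip: mult.assoc)
  also have "\<dots> = prod_list (a # ys) * x"
    using Cons by (simp add: mult.assoc)
  finally show ?case .
qed simp

lemma map_insert_index_upt:
  assumes "s \<le> n"
  shows "map (insert_index s) [0..<n] = [0..<s] @ [Suc s..<Suc n]"
proof -
  have "[0..<n] = [0..<s] @ [s..<n]"
    using assms upt_add_eq_append[of 0 s "n - s"] by simp
  moreover have "map (insert_index s) [0..<s] = [0..<s]"
    by (auto simp: insert_index_def intro: map_idI)
  moreover have "map (insert_index s) [s..<n] = map Suc [s..<n]"
    by (auto simp: insert_index_def)
  ultimately show ?thesis by (simp add: map_Suc_upt)
qed

lemma prod_list_upt_move_to_end:
  fixes f :: "nat \<Rightarrow> 'a::monoid_mult"
  assumes "s \<le> n" and "\<And>t. s < t \<Longrightarrow> t \<le> n \<Longrightarrow> x * f t = f t * x"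
  shows "prod_list (map (\<lambda>t. if t = s then x else f t) [0..<Suc n])
       = prod_list (map (f \<circ> insert_index s) [0..<n]) * x"
proof -
  have split: "[0..<Suc n] = [0..<s] @ s # [Suc s..<Suc n]"
    using assms(1) upt_add_eq_append[of 0 s "Suc n - s"] by (simp add: upt_conv_Cons)
  have "map (\<lambda>t. if t = s then x else f t) [0..<Suc n] = map f [0..<s] @ x # map f [Suc s..<Suc n]"
    by (subst split) auto
  then have "prod_list (map (\<lambda>t. if t = s then x else f t) [0..<Suc n])
      = prod_list (map f [0..<s]) * (x * prod_list (map f [Suc s..<Suc n]))"
    by (simp only: prod_list.append prod_list.Cons list.map mult.assoc)
  also have "x * prod_list (map f [Suc s..<Suc n]) = prod_list (map f [Suc s..<Suc n]) * x"
    by (rule prod_list_commute) (auto intro: assms(2))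
  finally show ?thesis
    using assms(1) by (simp add: map_insert_index_upt mult.assoc flip: map_map)
qed

lemma rdet_identical_columns:
  fixes M :: "nat \<Rightarrow> nat \<Rightarrow> 'a::ring_1"
  assumes "i \<noteq> k" "i < g" "k < g" and same_cols: "\<And>t. M t i = M t k"
  shows "rdet g M = 0"
proof -
  define \<tau> where "\<tau> = Transposition.transpose i k"
  define F where "F \<sigma> = of_int (sign \<sigma>) * prod_list (map (\<lambda>t. M t (\<sigma> t)) [0..<g])" for \<sigma>
  define Even where "Even = {\<sigma>. \<sigma> permutes {..<g} \<and> evenperm \<sigma>}"
  define Odd where "Odd = {\<sigma>. \<sigma> permutes {..<g} \<and> \<not> evenperm \<sigma>}"
  have \<tau>: "\<tau> permutes {..<g}" "permutation \<tau>" "\<tau> \<circ> \<tau> = id" "\<not> evenperm \<tau>"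
    using assms(1-3) by (auto simp: \<tau>_def permutes_swap_id evenperm_swap permutation_swap_id)
  have parity: "evenperm (\<tau> \<circ> \<sigma>) \<longleftrightarrow> \<not> evenperm \<sigma>" and \<tau>_comp_permutes: "\<tau> \<circ> \<sigma> permutes {..<g}"
    if "\<sigma> permutes {..<g}" for \<sigma>
  proof -
    have "permutation \<sigma>"
      using that by (auto simp: permutation_permutes)
    then show "evenperm (\<tau> \<circ> \<sigma>) \<longleftrightarrow> \<not> evenperm \<sigma>"
      using \<tau> by (simp add: evenperm_comp)
    show "\<tau> \<circ> \<sigma> permutes {..<g}"
      using that \<tau> by (simp add: permutes_compose)
  qed
  have F_swap: "F (\<tau> \<circ> \<sigma>) = - F \<sigma>" if "\<sigma> permutes {..<g}" for \<sigma>
  proof -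
    have "M t (\<tau> l) = M t l" for t l
      using same_cols by (simp add: \<tau>_def Transposition.transpose_def)
    then show ?thesis
      using parity[OF that] by (simp add: F_def sign_def)
  qed
  \<comment> \<open>Pairing \<open>\<sigma>\<close> with \<open>\<tau> \<circ> \<sigma>\<close> only gives \<open>rdet g M = - rdet g M\<close>, useless in
    characteristic 2; so the pairing is used between the even and the odd permutations.\<close>
  have "rdet g M = sum F Even + sum F Odd"
    unfolding rdet_def F_def Even_def Odd_def
    by (subst sum.union_disjoint[symmetric]) (auto simp: finite_permutations intro: sum.cong)
  also have "sum F Odd = sum (\<lambda>\<sigma>. F (\<tau> \<circ> \<sigma>)) Even"
    by (rule sum.reindex_bij_witness[of _ "(\<circ>) \<tau>" "(\<circ>) \<tau>"])
      (auto simp: Even_def Odd_def parity \<tau>_comp_permutes comp_assoc[symmetric] \<tau>(3))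
  also have "\<dots> = - sum F Even"
    by (simp add: Even_def F_swap sum_negf)
  finally show ?thesis by simp
qed

lemma minor_eq_insert_index: "minor M i j k l = M (insert_index i k) (insert_index j l)"
  by (simp add: minor_def insert_index_def)

lemma permutation_insert_insert_index:
  "permutation_insert s i q (insert_index s k) = insert_index i (q k)"
  unfolding permutation_insert_expand insert_index_def by auto

lemma cofactor_mult_eq_rdet_replace_row:
  fixes M :: "nat \<Rightarrow> nat \<Rightarrow> 'a::ring_1"
  assumes s: "s < g" and i: "i < g"
    and commutes: "\<And>t l. t < g \<Longrightarrow> l < g \<Longrightarrow> t \<noteq> s \<Longrightarrow> x * M t l = M t l * x"
  shows "cofactor g M s i * x = rdet g (replace_row M s (\<lambda>l. if l = i then x else 0))"
proof -
  obtain n where g: "g = Suc n"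
    using s by (cases g) auto
  define N where "N = replace_row M s (\<lambda>l. if l = i then x else 0)"
  define F where "F \<sigma> = of_int (sign \<sigma>) * prod_list (map (\<lambda>t. N t (\<sigma> t)) [0..<g])" for \<sigma>
  have vanish: "F \<sigma> = 0" if "\<sigma> s \<noteq> i" for \<sigma>
  proof -
    have "0 \<in> set (map (\<lambda>t. N t (\<sigma> t)) [0..<g])"
      using that s by (force simp: N_def replace_row_def)
    then show ?thesis
      by (simp add: F_def prod_list_eq_0_if_0_in_set)
  qed
  have "rdet g N = sum F {\<sigma>. \<sigma> permutes {0..<Suc n}}"
    by (simp add: rdet_def F_def g atLeast0LessThan)
  also have "\<dots> = sum F {\<sigma>. \<sigma> permutes {0..<Suc n} \<and> \<sigma> s = i}"
    using vanish by (intro sum.mono_neutral_right) (auto simp: finite_permutations)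
  also have "\<dots> = (\<Sum>q | q permutes {0..<n}. F (permutation_insert s i q))"
    using s i unfolding g permutation_fix[OF s[unfolded g] i[unfolded g]]
    by (simp add: sum.reindex permutation_insert_inj_on)
  also have "\<dots> = (\<Sum>q | q permutes {0..<n}. (-1) ^ (s + i) * of_int (sign q) *
      prod_list (map (\<lambda>k. minor M s i k (q k)) [0..<n]) * x)"
  proof (rule sum.cong[OF refl])
    fix q assume "q \<in> {q. q permutes {0..<n}}"
    then have q: "q permutes {0..<n}" by simp
    define p where "p = permutation_insert s i q"
    have p: "p permutes {0..<Suc n}" "p s = i"
      using permutation_insert_permutes[OF q] s i by (auto simp: p_def g)
    have "prod_list (map (\<lambda>t. N t (p t)) [0..<Suc n])
        = prod_list (map (\<lambda>t. if t = s then x else M t (p t)) [0..<Suc n])"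
      using p(2) by (simp add: N_def replace_row_def cong: if_cong)
    also have "\<dots> = prod_list (map ((\<lambda>t. M t (p t)) \<circ> insert_index s) [0..<n]) * x"
    proof (rule prod_list_upt_move_to_end)
      show "x * M t (p t) = M t (p t) * x" if "s < t" "t \<le> n" for t
        using that p(1) commutes[of t "p t"] g by (simp add: permutes_in_image)
    qed (use s g in simp)
    also have "map ((\<lambda>t. M t (p t)) \<circ> insert_index s) [0..<n] = map (\<lambda>k. minor M s i k (q k)) [0..<n]"
      by (simp add: p_def minor_eq_insert_index permutation_insert_insert_index)
    finally have prod_eq: "prod_list (map (\<lambda>t. N t (p t)) [0..<Suc n])
        = prod_list (map (\<lambda>k. minor M s i k (q k)) [0..<n]) * x" .
    have sign_eq: "of_int (sign p) = (-1) ^ (s + i) * (of_int (sign q) :: 'a)"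
      using signof_permutation_insert[OF q] s i g by (simp add: p_def)
    show "F p = (-1) ^ (s + i) * of_int (sign q) *
        prod_list (map (\<lambda>k. minor M s i k (q k)) [0..<n]) * x"
      unfolding F_def g prod_eq sign_eq by (simp add: mult.assoc)
  qed
  also have "\<dots> = cofactor g M s i * x"
    by (simp add: Defs.cofactor_def rdet_def g sum_distrib_left sum_distrib_right mult.assoc atLeast0LessThan)
  finally show ?thesis
    by (simp add: N_def)
qed

lemma sum_prod_list_replace_row_eq_replace_col:
  fixes M :: "nat \<Rightarrow> nat \<Rightarrow> 'a::semiring_1"
  assumes \<sigma>: "\<sigma> permutes {..<g}" and "i < g"
  shows "(\<Sum>s<g. prod_list (map (\<lambda>t. replace_row M s (\<lambda>l. if l = i then v s else 0) t (\<sigma> t)) [0..<g]))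
       = prod_list (map (\<lambda>t. replace_col M i v t (\<sigma> t)) [0..<g])"
proof -
  obtain s0 where s0: "s0 < g" "\<sigma> s0 = i"
    using permutes_image[OF \<sigma>] assms(2) by (metis imageE lessThan_iff)
  have \<sigma>_eq_i: "\<sigma> s = i \<longleftrightarrow> s = s0" for s
    using s0(2) permutes_inj[OF \<sigma>] by (auto dest: injD)
  have "prod_list (map (\<lambda>t. replace_row M s (\<lambda>l. if l = i then v s else 0) t (\<sigma> t)) [0..<g])
      = (if s = s0 then prod_list (map (\<lambda>t. replace_col M i v t (\<sigma> t)) [0..<g]) else 0)"
    if "s < g" for s
  proof (cases "s = s0")
    case True
    then show ?thesis
      by (auto simp: replace_row_def replace_col_def \<sigma>_eq_i intro!: arg_cong[where f = prod_list])
  next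
    case False
    then have "0 \<in> set (map (\<lambda>t. replace_row M s (\<lambda>l. if l = i then v s else 0) t (\<sigma> t)) [0..<g])"
      using that by (force simp: replace_row_def \<sigma>_eq_i)
    then show ?thesis
      using False by (simp add: prod_list_eq_0_if_0_in_set)
  qed
  then show ?thesis
    using s0 by simp
qed

lemma sum_cofactor_mult_eq_rdet_replace_col:
  fixes M :: "nat \<Rightarrow> nat \<Rightarrow> 'a::ring_1"
  assumes "i < g"
    and commutes: "\<And>s t l. s < g \<Longrightarrow> t < g \<Longrightarrow> l < g \<Longrightarrow> t \<noteq> s \<Longrightarrow> v s * M t l = M t l * v s"
  shows "(\<Sum>s<g. cofactor g M s i * v s) = rdet g (replace_col M i v)"
proof -
  define N where "N s = replace_row M s (\<lambda>l. if l = i then v s else 0)" for s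
  have "(\<Sum>s<g. cofactor g M s i * v s) = (\<Sum>s<g. rdet g (N s))"
    using assms unfolding N_def by (intro sum.cong refl cofactor_mult_eq_rdet_replace_row) auto
  also have "\<dots> = (\<Sum>\<sigma> | \<sigma> permutes {..<g}.
      of_int (sign \<sigma>) * (\<Sum>s<g. prod_list (map (\<lambda>t. N s t (\<sigma> t)) [0..<g])))"
    unfolding rdet_def sum_distrib_left by (rule sum.swap)
  also have "\<dots> = rdet g (replace_col M i v)"
    unfolding rdet_def N_def using assms(1)
    by (intro sum.cong refl) (simp add: sum_prod_list_replace_row_eq_replace_col)
  finally show ?thesis .
qed

lemma sum_cofactor_mult_column:
  fixes M :: "nat \<Rightarrow> nat \<Rightarrow> 'a::ring_1"
  assumes "rows_commute g M" "i < g" "k < g"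
  shows "(\<Sum>s<g. cofactor g M s i * M s k) = (if i = k then rdet g M else 0)"
proof -
  have "(\<Sum>s<g. cofactor g M s i * M s k) = rdet g (replace_col M i (\<lambda>t. M t k))"
    using assms by (intro sum_cofactor_mult_eq_rdet_replace_col) (auto simp: rows_commute_def)
  also have "\<dots> = (if i = k then rdet g M else 0)"
  proof (cases "i = k")
    case True
    then have "replace_col M i (\<lambda>t. M t k) = M"
      by (simp add: replace_col_def fun_eq_iff)
    with True show ?thesis
      by simp
  next
    case False
    then have "rdet g (replace_col M i (\<lambda>t. M t k)) = 0"
      using assms(2,3) by (intro rdet_identical_columns[of i k]) (auto simp: replace_col_def)
    with False show ?thesis
      by simp
  qed
  finally show ?thesis .
qed

lemma sum_cofactor_mult_matmul:
  fixes M C :: "nat \<Rightarrow> nat \<Rightarrow> 'a::ring_1"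
  assumes "rows_commute g M" "i < g"
  shows "(\<Sum>s<g. cofactor g M s i * matmul g M C s r) = rdet g M * C i r"
proof -
  have "(\<Sum>s<g. cofactor g M s i * matmul g M C s r)
      = (\<Sum>k<g. (\<Sum>s<g. cofactor g M s i * M s k) * C k r)"
    unfolding matmul_def sum_distrib_left sum_distrib_right mult.assoc by (rule sum.swap)
  also have "\<dots> = (\<Sum>k<g. (if i = k then rdet g M * C k r else 0))"
    using assms by (intro sum.cong refl) (simp add: sum_cofactor_mult_column)
  also have "\<dots> = rdet g M * C i r"
    using assms(2) by simp
  finally show ?thesis .
qed

lemma rdet_mult_right_inverse:
  fixes M C :: "nat \<Rightarrow> nat \<Rightarrow> 'a::ring_1"
  assumes "rows_commute g M"
    and right_inverse: "\<And>s r. s < g \<Longrightarrow> r < g \<Longrightarrow> matmul g M C s r = idmat s r"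
    and "i < g" "j < g"
  shows "rdet g M * C i j = cofactor g M j i"
proof -
  have "rdet g M * C i j = (\<Sum>s<g. cofactor g M s i * idmat s j)"
    using assms by (simp flip: sum_cofactor_mult_matmul)
  also have "\<dots> = cofactor g M j i"
    using assms(4) by (simp add: idmat_def if_distrib[of "times _"] cong: if_cong)
  finally show ?thesis .
qed

lemma cofactor_replace_row_same: "cofactor g (replace_row M r v) r l = cofactor g M r l"
proof -
  have "minor (replace_row M r v) r l = minor M r l"
    by (auto simp: minor_def replace_row_def fun_eq_iff)
  then show ?thesis
    by (simp add: Defs.cofactor_def)
qed

lemma cofactor_mult_right_inverse_swap:
  fixes M C :: "nat \<Rightarrow> nat \<Rightarrow> 'a::ring_1"
  assumes rc: "rows_commute g M"
    and right_inverse: "\<And>s r. s < g \<Longrightarrow> r < g \<Longrightarrow> matmul g M C s r = idmat s r"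
    and "r < g" "i < g" "j < g"
  shows "cofactor g M r i * C j r = cofactor g M r j * C i r"
proof -
  define E where "E = replace_row M r (\<lambda>l. if l = j then 1 else 0)"
  have "rows_commute g E"
    using rc by (auto simp: rows_commute_def E_def replace_row_def)
  have column_r: "matmul g E C s r = (if s = r then C j r else 0)" if "s < g" for s
    using right_inverse[OF that assms(3)] assms(5)
    by (simp add: matmul_def E_def replace_row_def idmat_def if_distrib[of "\<lambda>x. x * _"] cong: if_cong)
  have "rdet g E = cofactor g M r j"
    using assms(3,5) by (simp add: E_def flip: cofactor_mult_eq_rdet_replace_row)
  then have "cofactor g M r j * C i r = (\<Sum>s<g. cofactor g E s i * matmul g E C s r)"
    using sum_cofactor_mult_matmul[OF \<open>rows_commute g E\<close> assms(4)] by simp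
  also have "\<dots> = (\<Sum>s<g. if s = r then cofactor g E s i * C j r else 0)"
    by (intro sum.cong refl) (simp add: column_r)
  also have "\<dots> = cofactor g M r i * C j r"
    using assms(3) by (simp add: E_def cofactor_replace_row_same)
  finally show ?thesis ..
qed

theorem mainTheorem2:
  fixes \<phi> :: "complex \<Rightarrow> 'a::ring_1"
    and g :: nat
    and B C :: "nat \<Rightarrow> nat \<Rightarrow> 'a"
    and Dinv :: 'a
  assumes alg: "complex_algebra_hom \<phi>"
    and rows_commute: "\<And>i j k l. i < g \<Longrightarrow> j < g \<Longrightarrow> k < g \<Longrightarrow> l < g \<Longrightarrow> i \<noteq> j \<Longrightarrow>
                          B i k * B j l = B j l * B i k"
    and D_inv: "rdet g B * Dinv = 1" "Dinv * rdet g B = 1"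
    and B_inv: "\<And>i j. i < g \<Longrightarrow> j < g \<Longrightarrow> matmul g B C i j = idmat i j"
               "\<And>i j. i < g \<Longrightarrow> j < g \<Longrightarrow> matmul g C B i j = idmat i j"
  shows "(\<forall>i<g. \<forall>j<g. C i j = Dinv * cofactor g B j i)
       \<and> (\<forall>i<g. \<forall>j<g. \<forall>r<g. C i r * C j r = C j r * C i r)
       \<and> (\<forall>i<g. \<forall>j<g. \<forall>r<g. cofactor g B r i * Dinv * cofactor g B r j
                             = cofactor g B r j * Dinv * cofactor g B r i)"
proof -
  have rc: "rows_commute g B"
    using rows_commute by (auto simp: rows_commute_def)
  have inverse_eq: "C i j = Dinv * cofactor g B j i" if "i < g" "j < g" for i j
  proof -
    have "C i j = Dinv * (rdet g B * C i j)"
      using D_inv(2) by (simp flip: mult.assoc)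
    then show ?thesis
      using rdet_mult_right_inverse[OF rc B_inv(1) that] by simp
  qed
  have swap: "cofactor g B r i * C j r = cofactor g B r j * C i r" if "i < g" "j < g" "r < g" for i j r
    using cofactor_mult_right_inverse_swap[OF rc B_inv(1)] that by blast
  have "C i r * C j r = C j r * C i r" if "i < g" "j < g" "r < g" for i j r
    using swap[OF that] inverse_eq[of i r] inverse_eq[of j r] that by (simp add: mult.assoc)
  moreover have "cofactor g B r i * Dinv * cofactor g B r j = cofactor g B r j * Dinv * cofactor g B r i"
    if "i < g" "j < g" "r < g" for i j r
    using swap[OF that] inverse_eq[of i r] inverse_eq[of j r] that by (simp add: mult.assoc)
  ultimately show ?thesis
    using inverse_eq by blast
qed

end
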